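(* Let ${\bf u}\in\mathcal A^{\mathbb N}$ have its language closed under reversal and let $w$ be a palindromic factor of ${\bf u}$. If the graph $\Theta(w)$ is connected, then $m(w)\ge \#E^=(w)-1$; moreover $m(w)>\#E^=(w)-1$ if and only if $\Theta(w)$ contains a cycle, and $m(w)=\#E^=(w)-1$ if and only if $\Theta(w)$ is a tree.
   Context: The language of ${\bf u}$ (set of its finite factors) is closed under reversal if $w$ a factor implies its reversal $\widetilde w$ is a factor; $w$ is a palindrome if $w=\widetilde w$. For a factor $w$: $E^+(w)=\{b: wb\text{ factor}\}$, $E^-(w)=\{a: aw\text{ factor}\}$, $E(w)=\{(a,b): awb\text{ factor}\}$, $E^=(w)=\{a: awa\text{ factor}\}$, and $m(w)=\#E(w)-\#E^+(w)-\#E^-(w)+1$. For a palindromic factor $w$ (so $E^-(w)=E^+(w)$), $\Theta(w)$ is the simple graph with vertex set $E^+(w)$ and edges $\{a,b\}$ for $(a,b)\in E(w)$ with $a\ne b$. *)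

theory Defs
  imports Main
begin

definition factor :: "(nat \<Rightarrow> 'a) \<Rightarrow> 'a list \<Rightarrow> bool" where
  "factor u w \<longleftrightarrow> (\<exists>i. w = map u [i..<i + length w])"

definition lang_closed_rev :: "(nat \<Rightarrow> 'a) \<Rightarrow> bool" where
  "lang_closed_rev u \<longleftrightarrow> (\<forall>w. factor u w \<longrightarrow> factor u (rev w))"

definition palindrome :: "'a list \<Rightarrow> bool" where
  "palindrome w \<longleftrightarrow> w = rev w"

definition Eplus :: "(nat \<Rightarrow> 'a) \<Rightarrow> 'a list \<Rightarrow> 'a set" where
  "Eplus u w = {b. factor u (w @ [b])}"

definition Eminus :: "(nat \<Rightarrow> 'a) \<Rightarrow> 'a list \<Rightarrow> 'a set" where
  "Eminus u w = {a. factor u (a # w)}"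

definition Eboth :: "(nat \<Rightarrow> 'a) \<Rightarrow> 'a list \<Rightarrow> ('a \<times> 'a) set" where
  "Eboth u w = {(a, b). factor u (a # w @ [b])}"

definition Eeq :: "(nat \<Rightarrow> 'a) \<Rightarrow> 'a list \<Rightarrow> 'a set" where
  "Eeq u w = {a. factor u (a # w @ [a])}"

definition mult :: "(nat \<Rightarrow> 'a) \<Rightarrow> 'a list \<Rightarrow> int" where
  "mult u w = int (card (Eboth u w)) - int (card (Eplus u w)) - int (card (Eminus u w)) + 1"

text \<open>Simple graphs given by a vertex set V and a symmetric irreflexive adjacency relation.\<close>

definition graph_connected :: "'v set \<Rightarrow> ('v \<Rightarrow> 'v \<Rightarrow> bool) \<Rightarrow> bool" where
  "graph_connected V adj \<longleftrightarrow>
     (\<forall>x\<in>V. \<forall>y\<in>V. (\<lambda>a b. a \<in> V \<and> b \<in> V \<and> adj a b)\<^sup>*\<^sup>* x y)"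

definition graph_has_cycle :: "'v set \<Rightarrow> ('v \<Rightarrow> 'v \<Rightarrow> bool) \<Rightarrow> bool" where
  "graph_has_cycle V adj \<longleftrightarrow>
     (\<exists>cs. length cs \<ge> 3 \<and> distinct cs \<and> set cs \<subseteq> V \<and>
        (\<forall>i < length cs. adj (cs ! i) (cs ! ((i + 1) mod length cs))))"

definition graph_is_tree :: "'v set \<Rightarrow> ('v \<Rightarrow> 'v \<Rightarrow> bool) \<Rightarrow> bool" where
  "graph_is_tree V adj \<longleftrightarrow> graph_connected V adj \<and> \<not> graph_has_cycle V adj"

definition Theta_V :: "(nat \<Rightarrow> 'a) \<Rightarrow> 'a list \<Rightarrow> 'a set" where
  "Theta_V u w = Eplus u w"

definition Theta_adj :: "(nat \<Rightarrow> 'a) \<Rightarrow> 'a list \<Rightarrow> 'a \<Rightarrow> 'a \<Rightarrow> bool" where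
  "Theta_adj u w a b \<longleftrightarrow> a \<in> Eplus u w \<and> b \<in> Eplus u w \<and> a \<noteq> b \<and>
     ((a, b) \<in> Eboth u w \<or> (b, a) \<in> Eboth u w)"

end

theory Submission
  imports Defs
begin

text \<open>
  Since the language is closed under reversal and \<open>w\<close> is a palindrome, \<open>E\<^sup>-(w) = E\<^sup>+(w)\<close> and
  \<open>E(w)\<close> is symmetric. Its diagonal elements \<open>(a, a)\<close> are counted by \<open>E\<^sup>=(w)\<close>, and the
  others come in pairs \<open>(a, b), (b, a)\<close>, one pair per edge of \<open>\<Theta>(w)\<close>. Hence
  \<open>m(w) - (#E\<^sup>=(w) - 1) = 2 (e - v + 1)\<close>, where \<open>v\<close> and \<open>e\<close> count the vertices and edges
  of \<open>\<Theta>(w)\<close>. For a connected graph \<open>e - v + 1 \<ge> 0\<close>, with equality exactly for trees.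
\<close>

abbreviation graph_step :: "'v set \<Rightarrow> ('v \<Rightarrow> 'v \<Rightarrow> bool) \<Rightarrow> 'v \<Rightarrow> 'v \<Rightarrow> bool" where
  "graph_step V adj a b \<equiv> a \<in> V \<and> b \<in> V \<and> adj a b"

definition graph_edges :: "'v set \<Rightarrow> ('v \<Rightarrow> 'v \<Rightarrow> bool) \<Rightarrow> 'v set set" where
  "graph_edges V adj = {{a, b} | a b. graph_step V adj a b}"

definition graph_path :: "'v set \<Rightarrow> ('v \<Rightarrow> 'v \<Rightarrow> bool) \<Rightarrow> 'v list \<Rightarrow> bool" where
  "graph_path V adj ps \<longleftrightarrow> distinct ps \<and> set ps \<subseteq> V \<and> successively adj ps"

definition remove_edge :: "'v set \<Rightarrow> ('v \<Rightarrow> 'v \<Rightarrow> bool) \<Rightarrow> 'v \<Rightarrow> 'v \<Rightarrow> bool" where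
  "remove_edge e adj a b \<longleftrightarrow> adj a b \<and> {a, b} \<noteq> e"

lemma finite_graph_edges: "finite V \<Longrightarrow> finite (graph_edges V adj)"
  by (rule finite_subset[of _ "Pow V"]) (auto simp: graph_edges_def)

lemma graph_edges_remove_edge: "graph_edges V (remove_edge e adj) = graph_edges V adj - {e}"
  by (auto simp: graph_edges_def remove_edge_def)

lemma graph_connectedD:
  "graph_connected V adj \<Longrightarrow> x \<in> V \<Longrightarrow> y \<in> V \<Longrightarrow> (graph_step V adj)\<^sup>*\<^sup>* x y"
  unfolding graph_connected_def by blast

lemma rtranclp_hd_last_if_successively:
  "successively R xs \<Longrightarrow> xs \<noteq> [] \<Longrightarrow> R\<^sup>*\<^sup>* (hd xs) (last xs)"
  by (induction R xs rule: successively.induct) (auto intro: converse_rtranclp_into_rtranclp)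

lemma graph_has_cycle_iff_path:
  fixes adj :: "'v \<Rightarrow> 'v \<Rightarrow> bool"
  shows "graph_has_cycle V adj \<longleftrightarrow>
     (\<exists>cs. graph_path V adj cs \<and> 3 \<le> length cs \<and> adj (last cs) (hd cs))"
proof -
  have closed_walk_iff:
    "(\<forall>i < length cs. adj (cs ! i) (cs ! ((i + 1) mod length cs))) \<longleftrightarrow>
       successively adj cs \<and> adj (last cs) (hd cs)" if "3 \<le> length cs" for cs :: "'v list"
  proof -
    let ?n = "length cs"
    have "(\<forall>i < ?n. adj (cs ! i) (cs ! ((i + 1) mod ?n))) \<longleftrightarrow>
        (\<forall>i. Suc i < ?n \<longrightarrow> adj (cs ! i) (cs ! Suc i)) \<and> adj (cs ! (?n - 1)) (cs ! 0)"
    proof (intro iffI conjI allI impI)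
      assume closed: "\<forall>i < ?n. adj (cs ! i) (cs ! ((i + 1) mod ?n))"
      show "adj (cs ! i) (cs ! Suc i)" if "Suc i < ?n" for i
        using closed[rule_format, of i] that by simp
      have "?n - 1 < ?n" "?n - 1 + 1 = ?n"
        using that by simp_all
      then show "adj (cs ! (?n - 1)) (cs ! 0)"
        using closed by (metis mod_self)
    next
      fix i
      assume walk: "(\<forall>i. Suc i < ?n \<longrightarrow> adj (cs ! i) (cs ! Suc i)) \<and> adj (cs ! (?n - 1)) (cs ! 0)"
        and "i < ?n"
      show "adj (cs ! i) (cs ! ((i + 1) mod ?n))"
      proof (cases "Suc i < ?n")
        case True
        then show ?thesis using walk by simp
      next
        case False
        with \<open>i < ?n\<close> have "i = ?n - 1" "i + 1 = ?n" by simp_all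
        then show ?thesis using walk by simp
      qed
    qed
    moreover have "cs \<noteq> []"
      using that by auto
    ultimately show ?thesis
      by (simp add: successively_conv_nth last_conv_nth hd_conv_nth)
  qed
  show ?thesis
    unfolding graph_has_cycle_def graph_path_def using closed_walk_iff by blast
qed

lemma card_le_card_graph_edges_plus_1:
  assumes fin: "finite V" and conn: "graph_connected V adj"
  shows "card V \<le> card (graph_edges V adj) + 1"
proof (cases "V = {}")
  case False
  then obtain r where r: "r \<in> V" by blast
  let ?R = "graph_step V adj"
  define d where "d y = (LEAST n. (?R ^^ n) y r)" for y
  have dist: "(?R ^^ d y) y r" if "y \<in> V" for y
    unfolding d_def
    by (rule LeastI_ex, rule rtranclp_imp_relpowp, rule graph_connectedD[OF conn that r])
  have closer: "\<exists>z. ?R y z \<and> d z < d y" if "y \<in> V" "y \<noteq> r" for y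
  proof -
    obtain k where k: "d y = Suc k"
      using dist[OF \<open>y \<in> V\<close>] \<open>y \<noteq> r\<close> by (cases "d y") simp_all
    then obtain z where "?R y z" "(?R ^^ k) z r"
      using dist[OF \<open>y \<in> V\<close>] relpowp_Suc_D2[of k ?R y r] by auto
    moreover have "d z \<le> k"
      unfolding d_def using \<open>(?R ^^ k) z r\<close> by (rule Least_le)
    ultimately show ?thesis
      using k by (intro exI[of _ z]) simp
  qed
  define parent where "parent y = (SOME z. ?R y z \<and> d z < d y)" for y
  have parent: "?R y (parent y)" "d (parent y) < d y" if "y \<in> V - {r}" for y
  proof -
    have "\<exists>z. ?R y z \<and> d z < d y"
      using closer that by blast
    from someI_ex[OF this] show "?R y (parent y)" "d (parent y) < d y"
      unfolding parent_def by blast+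
  qed
  \<comment> \<open>\<open>{x, parent x} = {y, parent y}\<close> with \<open>x \<noteq> y\<close> would give \<open>d x < d y < d x\<close>\<close>
  have "inj_on (\<lambda>y. {y, parent y}) (V - {r})"
  proof (rule inj_onI, rule ccontr)
    fix x y assume x: "x \<in> V - {r}" and y: "y \<in> V - {r}"
      and "{x, parent x} = {y, parent y}" "x \<noteq> y"
    then have "x = parent y \<and> y = parent x"
      by (metis doubleton_eq_iff)
    then show False
      using parent(2)[OF x] parent(2)[OF y] by (metis less_asym)
  qed
  moreover have "(\<lambda>y. {y, parent y}) ` (V - {r}) \<subseteq> graph_edges V adj"
    using parent(1) unfolding graph_edges_def by blast
  ultimately have "card (V - {r}) \<le> card (graph_edges V adj)"
    by (rule card_inj_on_le) (rule finite_graph_edges[OF fin])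
  then show ?thesis
    using r fin by simp
qed simp

lemma graph_connected_remove_edge:
  assumes conn: "graph_connected V adj" and "symp adj"
    and reach: "(graph_step V (remove_edge {x, y} adj))\<^sup>*\<^sup>* y x"
  shows "graph_connected V (remove_edge {x, y} adj)"
proof -
  let ?R' = "graph_step V (remove_edge {x, y} adj)"
  have "symp ?R'"
    using \<open>symp adj\<close> by (intro sympI) (auto simp: remove_edge_def insert_commute dest: sympD)
  then have reach': "?R'\<^sup>*\<^sup>* x y"
    using reach by (blast dest: sympD[OF symp_rtranclp])
  have step: "?R'\<^sup>*\<^sup>* a b" if "graph_step V adj a b" for a b
  proof (cases "{a, b} = {x, y}")
    case True
    then have "a = x \<and> b = y \<or> a = y \<and> b = x"
      by (simp add: doubleton_eq_iff)
    then show ?thesis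
      using reach reach' by blast
  next
    case False
    then show ?thesis
      using that by (simp add: remove_edge_def r_into_rtranclp)
  qed
  have "?R'\<^sup>*\<^sup>* a b" if "(graph_step V adj)\<^sup>*\<^sup>* a b" for a b
    using that by induction (auto intro: rtranclp_trans step)
  then show ?thesis
    using conn unfolding graph_connected_def by blast
qed

lemma cycle_edge_reachable_after_removal:
  assumes "graph_has_cycle V adj"
  shows "\<exists>x y. graph_step V adj x y \<and> (graph_step V (remove_edge {x, y} adj))\<^sup>*\<^sup>* y x"
proof -
  obtain cs where path: "graph_path V adj cs" and len: "3 \<le> length cs"
    and close: "adj (last cs) (hd cs)"
    using assms graph_has_cycle_iff_path by blast
  then obtain x y z rest where cs: "cs = x # y # z # rest"
    by (metis Suc_le_length_iff numeral_3_eq_3)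
  let ?R' = "graph_step V (remove_edge {x, y} adj)"
  have V: "set cs \<subseteq> V" and x_notin: "x \<notin> set (y # z # rest)"
    and last_ne: "last (z # rest) \<noteq> y"
    using path by (auto simp: graph_path_def cs)
  define ys where "ys = y # z # rest"
  have "successively ?R' ys"
  proof (rule successively_mono)
    show "successively adj ys"
      using path by (simp add: graph_path_def cs ys_def)
    fix a b assume a: "a \<in> set ys" and b: "b \<in> set ys" and "adj a b"
    have "x \<notin> {a, b}"
      using a b x_notin by (auto simp: ys_def)
    then have "{a, b} \<noteq> {x, y}"
      by blast
    moreover have "a \<in> V" "b \<in> V"
      using a b V by (auto simp: cs ys_def)
    ultimately show "?R' a b"
      using \<open>adj a b\<close> by (simp add: remove_edge_def)
  qed
  moreover have "?R' (last ys) x"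
  proof -
    have l_in: "last (z # rest) \<in> set (y # z # rest)"
      by simp
    then have "last (z # rest) \<noteq> x"
      using x_notin by blast
    then have "{last (z # rest), x} \<noteq> {x, y}"
      using last_ne by (simp add: doubleton_eq_iff)
    moreover have "last (z # rest) \<in> V" "x \<in> V"
      using l_in V by (auto simp: cs)
    ultimately show ?thesis
      using close by (simp add: remove_edge_def cs ys_def)
  qed
  moreover have "ys \<noteq> []" "hd ys = y"
    by (simp_all add: ys_def)
  ultimately have "successively ?R' (ys @ [x])" "hd (ys @ [x]) = y"
    by (simp_all add: successively_append_iff)
  then have "?R'\<^sup>*\<^sup>* y x"
    using rtranclp_hd_last_if_successively by fastforce
  moreover have "graph_step V adj x y"
    using path by (simp add: graph_path_def cs)
  ultimately show ?thesis
    by blast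
qed

lemma card_le_card_graph_edges_if_cycle:
  assumes fin: "finite V" and conn: "graph_connected V adj" and "symp adj"
    and "graph_has_cycle V adj"
  shows "card V \<le> card (graph_edges V adj)"
proof -
  obtain x y where "graph_step V adj x y"
    and reach: "(graph_step V (remove_edge {x, y} adj))\<^sup>*\<^sup>* y x"
    using cycle_edge_reachable_after_removal \<open>graph_has_cycle V adj\<close> by blast
  then have edge: "{x, y} \<in> graph_edges V adj"
    unfolding graph_edges_def by blast
  then have "0 < card (graph_edges V adj)"
    using finite_graph_edges[OF fin] card_gt_0_iff by blast
  have "card V \<le> card (graph_edges V (remove_edge {x, y} adj)) + 1"
    using card_le_card_graph_edges_plus_1 fin
      graph_connected_remove_edge[OF conn \<open>symp adj\<close> reach] by blast
  also have "\<dots> = card (graph_edges V adj)"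
    using edge finite_graph_edges[OF fin] \<open>0 < card (graph_edges V adj)\<close>
    by (simp add: graph_edges_remove_edge)
  finally show ?thesis .
qed

lemma graph_connected_remove_leaf:
  assumes conn: "graph_connected V adj" and "symp adj"
    and leaf: "\<And>z. z \<in> V \<Longrightarrow> adj x z \<Longrightarrow> z = y"
  shows "graph_connected (V - {x}) adj"
proof -
  let ?R' = "graph_step (V - {x}) adj"
  \<comment> \<open>a walk can only enter or leave the leaf \<open>x\<close> through \<open>y\<close>, so it can be short-cut\<close>
  have walk: "?R'\<^sup>*\<^sup>* a (if b = x then y else b)" if "(graph_step V adj)\<^sup>*\<^sup>* a b" "a \<noteq> x" for a b
    using that(1)
  proof induction
    case base
    show ?case
      using \<open>a \<noteq> x\<close> by simp
  next
    case (step b c)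
    consider "c = x" "b = x" | "c = x" "b \<noteq> x" | "c \<noteq> x" "b = x" | "c \<noteq> x" "b \<noteq> x"
      by blast
    then show ?case
    proof cases
      case 2
      then have "b = y"
        using step.hyps(2) leaf \<open>symp adj\<close> by (blast dest: sympD)
      then show ?thesis
        using step.IH 2 by simp
    next
      case 3
      then have "c = y"
        using step.hyps(2) leaf by blast
      then show ?thesis
        using step.IH 3 by simp
    next
      case 4
      then show ?thesis
        using step.IH step.hyps(2) by (simp add: rtranclp.rtrancl_into_rtrancl)
    qed (use step.IH in simp)
  qed
  show ?thesis
    unfolding graph_connected_def
  proof (intro ballI)
    fix a b assume "a \<in> V - {x}" "b \<in> V - {x}"
    then show "?R'\<^sup>*\<^sup>* a b"
      using walk[of a b] graph_connectedD[OF conn] by simp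
  qed
qed

lemma graph_path_take: "graph_path V adj ps \<Longrightarrow> graph_path V adj (take n ps)"
  unfolding graph_path_def
  by (metis append_take_drop_id distinct_take order_trans set_take_subset successively_append_iff)

lemma graph_leaf_exists:
  assumes fin: "finite V" and conn: "graph_connected V adj"
    and acyclic: "\<not> graph_has_cycle V adj" and "symp adj" and "irreflp adj"
    and two: "2 \<le> card V"
  shows "\<exists>x y. graph_step V adj x y \<and> (\<forall>z \<in> V. adj x z \<longrightarrow> z = y)"
proof -
  \<comment> \<open>the first vertex of a longest path is a leaf: all its neighbours lie on the path,
      and a neighbour beyond the second vertex would close a cycle\<close>
  define P where "P ps \<longleftrightarrow> graph_path V adj ps \<and> ps \<noteq> []" for ps
  obtain r where r: "r \<in> V"
    using two by fastforce
  have "P [r]"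
    using r by (simp add: P_def graph_path_def)
  moreover have "length ps < card V + 1" if "P ps" for ps
  proof -
    have "length ps = card (set ps)"
      using that by (simp add: P_def graph_path_def distinct_card)
    also have "\<dots> \<le> card V"
      using that fin by (simp add: P_def graph_path_def card_mono)
    finally show ?thesis
      by simp
  qed
  ultimately obtain ps where "P ps" and longest: "\<And>qs. P qs \<Longrightarrow> length qs \<le> length ps"
    using ex_has_greatest_nat[of P "[r]" length "card V + 1"] by blast
  then have path: "graph_path V adj ps" and "ps \<noteq> []"
    by (simp_all add: P_def)
  define x where "x = hd ps"
  have xV: "x \<in> V"
    using path \<open>ps \<noteq> []\<close> by (auto simp: graph_path_def x_def)
  have neighbour: "z = ps ! 1" if "z \<in> V" "adj x z" for z
  proof -
    have "z \<in> set ps"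
    proof (rule ccontr)
      assume "z \<notin> set ps"
      moreover have "adj z (hd ps)"
        using sympD[OF \<open>symp adj\<close> \<open>adj x z\<close>] by (simp add: x_def)
      ultimately have "P (z # ps)"
        using path \<open>z \<in> V\<close> by (simp add: P_def graph_path_def successively_Cons)
      then show False
        using longest[of "z # ps"] by simp
    qed
    then obtain j where j: "j < length ps" "z = ps ! j"
      by (auto simp: in_set_conv_nth)
    have "z \<noteq> x"
      using \<open>adj x z\<close> \<open>irreflp adj\<close> by (auto simp: irreflp_def)
    then have "j \<noteq> 0"
      using j \<open>ps \<noteq> []\<close> by (metis hd_conv_nth x_def)
    moreover have "\<not> 2 \<le> j"
    proof
      assume "2 \<le> j"
      let ?cs = "take (Suc j) ps"
      have "last ?cs = z" "hd ?cs = x"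
        using j \<open>ps \<noteq> []\<close> by (simp_all add: x_def last_conv_nth hd_conv_nth)
      then have "adj (last ?cs) (hd ?cs)"
        using sympD[OF \<open>symp adj\<close> \<open>adj x z\<close>] by simp
      moreover have "3 \<le> length ?cs"
        using \<open>2 \<le> j\<close> j by simp
      ultimately have "graph_has_cycle V adj"
        using graph_path_take[OF path] graph_has_cycle_iff_path by blast
      then show False
        using acyclic by blast
    qed
    ultimately have "j = 1"
      by simp
    then show ?thesis
      using j by simp
  qed
  have "V \<noteq> {x}"
    using two by auto
  then obtain v where "v \<in> V" "v \<noteq> x"
    using xV by blast
  then obtain y where "graph_step V adj x y"
    using graph_connectedD[OF conn xV] by (blast elim: converse_rtranclpE)
  then show ?thesis
    using neighbour by blast
qed

lemma card_graph_edges_less_if_acyclic: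
  assumes "finite V" "V \<noteq> {}" "graph_connected V adj" "\<not> graph_has_cycle V adj"
    and "symp adj" "irreflp adj"
  shows "card (graph_edges V adj) < card V"
  using assms(1-4)
proof (induction "card V" arbitrary: V rule: less_induct)
  case less
  show ?case
  proof (cases "2 \<le> card V")
    case False
    moreover have "0 < card V"
      using less.prems(1,2) by (simp add: card_gt_0_iff)
    ultimately have "card V = 1"
      by linarith
    then obtain r where "V = {r}"
      by (rule card_1_singletonE)
    then have "graph_edges V adj = {}"
      using \<open>irreflp adj\<close> by (auto simp: graph_edges_def irreflp_def)
    then show ?thesis
      using \<open>card V = 1\<close> by simp
  next
    case True
    obtain x y where xy: "graph_step V adj x y" and leaf: "\<forall>z \<in> V. adj x z \<longrightarrow> z = y"
      using graph_leaf_exists less.prems(1,3,4) \<open>symp adj\<close> \<open>irreflp adj\<close> True by blast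
    let ?V = "V - {x}"
    have "x \<noteq> y"
      using xy \<open>irreflp adj\<close> by (auto simp: irreflp_def)
    have "card ?V < card V"
      using xy less.prems(1) by (intro card_Diff1_less) simp_all
    moreover have "?V \<noteq> {}"
      using xy \<open>x \<noteq> y\<close> by blast
    moreover have "graph_connected ?V adj"
      using leaf by (intro graph_connected_remove_leaf[OF less.prems(3) \<open>symp adj\<close>]) blast
    moreover have "\<not> graph_has_cycle ?V adj"
      using less.prems(4) unfolding graph_has_cycle_def by blast
    ultimately have IH: "card (graph_edges ?V adj) < card ?V"
      using less.hyps less.prems(1) by simp
    have "graph_edges V adj \<subseteq> insert {x, y} (graph_edges ?V adj)"
    proof
      fix e assume "e \<in> graph_edges V adj"
      then obtain a b where e: "e = {a, b}" "graph_step V adj a b"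
        unfolding graph_edges_def by blast
      show "e \<in> insert {x, y} (graph_edges ?V adj)"
      proof (cases "a = x \<or> b = x")
        case True
        then have "e = {x, y}"
        proof
          assume "a = x"
          then have "b = y"
            using e leaf by blast
          then show ?thesis
            using e \<open>a = x\<close> by simp
        next
          assume "b = x"
          then have "a = y"
            using e leaf sympD[OF \<open>symp adj\<close>] by blast
          then show ?thesis
            using e \<open>b = x\<close> by (simp add: insert_commute)
        qed
        then show ?thesis
          by simp
      next
        case False
        then have "graph_step ?V adj a b"
          using e by simp
        then show ?thesis
          using e unfolding graph_edges_def by blast
      qed
    qed
    moreover have "finite (graph_edges ?V adj)"
      using less.prems(1) by (simp add: finite_graph_edges)
    ultimately have "card (graph_edges V adj) \<le> card (insert {x, y} (graph_edges ?V adj))"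
      by (simp add: card_mono)
    also have "\<dots> \<le> card (graph_edges ?V adj) + 1"
      by (simp add: card_insert_le_m1 card_insert_if)
    finally show ?thesis
      using IH \<open>card ?V < card V\<close> by linarith
  qed
qed

lemma connected_graph_card_edges:
  assumes "finite V" "V \<noteq> {}" "graph_connected V adj" "symp adj" "irreflp adj"
  shows "card V \<le> card (graph_edges V adj) + 1"
    and "graph_has_cycle V adj \<longleftrightarrow> card V \<le> card (graph_edges V adj)"
  using card_le_card_graph_edges_plus_1 card_le_card_graph_edges_if_cycle
    card_graph_edges_less_if_acyclic assms by (metis not_less)+

lemma card_sym_relation:
  assumes "finite R" "sym R"
  shows "card R = card {a. (a, a) \<in> R} + 2 * card {{a, b} | a b. (a, b) \<in> R \<and> a \<noteq> b}"
proof -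
  define D where "D = {p \<in> R. fst p \<noteq> snd p}"
  define edge where "edge p = {fst p, snd p}" for p :: "'a \<times> 'a"
  let ?loops = "(\<lambda>a. (a, a)) ` {a. (a, a) \<in> R}"
  have "R = ?loops \<union> D"
    by (auto simp: D_def)
  also have "card \<dots> = card ?loops + card D"
    using \<open>finite R\<close> by (intro card_Un_disjoint) (auto simp: D_def intro: finite_subset)
  also have "card ?loops = card {a. (a, a) \<in> R}"
    by (simp add: card_image inj_on_def)
  finally have "card R = card {a. (a, a) \<in> R} + card D" .
  moreover have "card {p \<in> D. edge p = e} = 2" if e: "e \<in> edge ` D" for e
  proof -
    obtain a b where "(a, b) \<in> D" "e = {a, b}"
      using e unfolding edge_def by force
    moreover from this have "{p \<in> D. edge p = e} = {(a, b), (b, a)}"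
      using \<open>sym R\<close> unfolding D_def edge_def
      by (auto simp: doubleton_eq_iff intro: symD)
    ultimately show ?thesis
      by (simp add: D_def)
  qed
  moreover have "card D = (\<Sum>e \<in> edge ` D. card {p \<in> D. edge p = e})"
    unfolding card_eq_sum by (rule sum.image_gen) (simp add: D_def \<open>finite R\<close>)
  ultimately have "card R = card {a. (a, a) \<in> R} + 2 * card (edge ` D)"
    by simp
  moreover have "edge ` D = {{a, b} | a b. (a, b) \<in> R \<and> a \<noteq> b}"
    by (auto simp: D_def edge_def image_def)
  ultimately show ?thesis
    by simp
qed

lemma factor_appendD:
  assumes "factor u (x @ y)"
  shows "factor u x" and "factor u y"
proof -
  obtain i where i: "x @ y = map u [i..<i + length (x @ y)]"
    using assms unfolding factor_def by blast
  have "[i..<i + length (x @ y)] = [i..<i + length x] @ [i + length x..<i + length x + length y]"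
    using upt_add_eq_append[of i "i + length x" "length y"] by (simp add: add.assoc)
  with i have "x = map u [i..<i + length x]" "y = map u [i + length x..<i + length x + length y]"
    by (simp_all add: append_eq_append_conv)
  then show "factor u x" "factor u y"
    unfolding factor_def by blast+
qed

lemma factor_snoc_ex: "factor u w \<Longrightarrow> \<exists>b. factor u (w @ [b])"
proof -
  assume "factor u w"
  then obtain i where "w = map u [i..<i + length w]"
    unfolding factor_def by blast
  then have "w @ [u (i + length w)] = map u [i..<i + length (w @ [u (i + length w)])]"
    by simp
  then show ?thesis
    unfolding factor_def by blast
qed

lemma factor_rev_iff: "lang_closed_rev u \<Longrightarrow> factor u (rev x) \<longleftrightarrow> factor u x"
  unfolding lang_closed_rev_def by (metis rev_rev_ident)

lemma Eboth_subset_Eminus_Eplus: "Eboth u w \<subseteq> Eminus u w \<times> Eplus u w"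
proof (rule subrelI)
  fix a b assume "(a, b) \<in> Eboth u w"
  then have "factor u ((a # w) @ [b])" "factor u ([a] @ (w @ [b]))"
    by (simp_all add: Eboth_def)
  then have "factor u (a # w)" "factor u (w @ [b])"
    by (blast dest: factor_appendD)+
  then show "(a, b) \<in> Eminus u w \<times> Eplus u w"
    by (simp add: Eminus_def Eplus_def)
qed

context
  fixes u :: "nat \<Rightarrow> 'a" and w :: "'a list"
  assumes rev_closed: "lang_closed_rev u" and pal: "palindrome w"
begin

lemma Eminus_eq_Eplus: "Eminus u w = Eplus u w"
proof -
  have "rev (a # w) = w @ [a]" for a
    using pal by (simp add: palindrome_def)
  then show ?thesis
    unfolding Eminus_def Eplus_def by (metis factor_rev_iff[OF rev_closed])
qed

lemma sym_Eboth: "sym (Eboth u w)"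
proof (rule symI)
  fix a b assume "(a, b) \<in> Eboth u w"
  moreover have "rev (a # w @ [b]) = b # w @ [a]"
    using pal by (simp add: palindrome_def)
  ultimately show "(b, a) \<in> Eboth u w"
    unfolding Eboth_def by (metis case_prod_conv factor_rev_iff[OF rev_closed] mem_Collect_eq)
qed

lemma Theta_adj_iff: "Theta_adj u w a b \<longleftrightarrow> a \<noteq> b \<and> (a, b) \<in> Eboth u w"
  using Eboth_subset_Eminus_Eplus[of u w] sym_Eboth
  unfolding Theta_adj_def Eminus_eq_Eplus by (auto dest: symD)

lemma graph_edges_Theta:
  "graph_edges (Theta_V u w) (Theta_adj u w) = {{a, b} | a b. (a, b) \<in> Eboth u w \<and> a \<noteq> b}"
  using Eboth_subset_Eminus_Eplus[of u w]
  unfolding graph_edges_def Theta_V_def Theta_adj_iff Eminus_eq_Eplus by blast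

lemma mult_eq_card_Theta:
  assumes "finite (Eboth u w)"
  shows "mult u w = int (card (Eeq u w)) + 2 * int (card (graph_edges (Theta_V u w) (Theta_adj u w)))
    - 2 * int (card (Theta_V u w)) + 1"
proof -
  have "Eeq u w = {a. (a, a) \<in> Eboth u w}"
    by (simp add: Eeq_def Eboth_def)
  then have "card (Eboth u w) = card (Eeq u w) + 2 * card (graph_edges (Theta_V u w) (Theta_adj u w))"
    using card_sym_relation[OF assms sym_Eboth] by (simp add: graph_edges_Theta)
  then show ?thesis
    by (simp add: mult_def Eminus_eq_Eplus Theta_V_def)
qed

end

theorem lemma15:
  fixes u :: "nat \<Rightarrow> 'a::finite" and w :: "'a list"
  assumes "lang_closed_rev u"
    and "factor u w"
    and "palindrome w"
    and "graph_connected (Theta_V u w) (Theta_adj u w)"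
  shows "mult u w \<ge> int (card (Eeq u w)) - 1
    \<and> (mult u w > int (card (Eeq u w)) - 1 \<longleftrightarrow> graph_has_cycle (Theta_V u w) (Theta_adj u w))
    \<and> (mult u w = int (card (Eeq u w)) - 1 \<longleftrightarrow> graph_is_tree (Theta_V u w) (Theta_adj u w))"
proof -
  let ?V = "Theta_V u w" and ?adj = "Theta_adj u w"
  have "?V \<noteq> {}"
    using factor_snoc_ex[OF \<open>factor u w\<close>] by (simp add: Theta_V_def Eplus_def)
  moreover have "symp ?adj" "irreflp ?adj"
    by (auto simp: Theta_adj_def symp_def irreflp_def)
  ultimately have "card ?V \<le> card (graph_edges ?V ?adj) + 1"
    and "graph_has_cycle ?V ?adj \<longleftrightarrow> card ?V \<le> card (graph_edges ?V ?adj)"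
    using connected_graph_card_edges[OF finite _ assms(4)] by blast+
  moreover have "mult u w = int (card (Eeq u w)) + 2 * int (card (graph_edges ?V ?adj))
      - 2 * int (card ?V) + 1"
    using mult_eq_card_Theta[OF assms(1,3)] by simp
  ultimately show ?thesis
    using assms(4) unfolding graph_is_tree_def by linarith
qed

end
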